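(* Let $d\ge1$ and $s\in(-\tfrac12,\infty)$. Define $S_s:\mathbb{R}^{d\times d}\to\mathbb{R}^{d\times d}$ by $S_s(\mathbf A):=\mathbf U\mathbf H^{2s+1}\mathbf V^T$, where $\mathbf A=\mathbf U\mathbf H\mathbf V^T$ is a singular value decomposition ($\mathbf U,\mathbf V$ orthogonal, $\mathbf H$ diagonal with the nonnegative singular values $\sigma_1,\dots,\sigma_d$ of $\mathbf A$, and $\mathbf H^{2s+1}=\operatorname{diag}(\sigma_j^{2s+1})$); equivalently $S_s(\mathbf A)=(\mathbf A\mathbf A^T)^s\mathbf A$ whenever the latter is defined. Then for all $\mathbf A,\mathbf C\in\mathbb{R}^{d\times d}$, \[ (S_s(\mathbf A)-S_s(\mathbf C)):(\mathbf A-\mathbf C)\ge0. \]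
   Context: ":" denotes the Frobenius inner product $\mathbf X:\mathbf Y=\sum_{i,j}X_{ij}Y_{ij}$. $S_s(\mathbf A)$ does not depend on the choice of singular value decomposition. *)

theory Defs
  imports "HOL-Analysis.Analysis"
begin

definition diag_mat :: "real ^ 'n \<Rightarrow> real ^ 'n ^ 'n" where
  "diag_mat \<sigma> = (\<chi> i j. if i = j then \<sigma> $ i else 0)"

definition is_svd :: "real ^ 'n ^ 'n \<Rightarrow> real ^ 'n ^ 'n \<Rightarrow> real ^ 'n \<Rightarrow> real ^ 'n ^ 'n \<Rightarrow> bool" where
  "is_svd A U \<sigma> V \<longleftrightarrow> orthogonal_matrix U \<and> orthogonal_matrix V \<and>
     (\<forall>i. \<sigma> $ i \<ge> 0) \<and> A = U ** diag_mat \<sigma> ** transpose V"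

definition S_map :: "real \<Rightarrow> real ^ 'n ^ 'n \<Rightarrow> real ^ 'n ^ 'n" where
  "S_map s A = (SOME B. \<exists>U \<sigma> V. is_svd A U \<sigma> V \<and>
      B = U ** diag_mat (\<chi> i. (\<sigma> $ i) powr (2 * s + 1)) ** transpose V)"

definition frob :: "real ^ 'n ^ 'n \<Rightarrow> real ^ 'n ^ 'n \<Rightarrow> real" where
  "frob X Y = (\<Sum>i\<in>UNIV. \<Sum>j\<in>UNIV. X $ i $ j * Y $ i $ j)"

end

theory Submission
  imports Defs
begin

text \<open>Write \<open>A = U H V\<^sup>T\<close> and \<open>C = W K Z\<^sup>T\<close> as singular value decompositions, \<open>p = 2s + 1 \<ge> 0\<close>,
  and let \<open>P = U\<^sup>T W\<close>, \<open>Q = V\<^sup>T Z\<close>. Expanding the Frobenius product in these bases gives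
  \<open>\<Sum>\<^sub>i\<^sub>j (\<sigma>\<^sub>i\<^sup>p\<sigma>\<^sub>i + \<kappa>\<^sub>j\<^sup>p\<kappa>\<^sub>j) m\<^sub>i\<^sub>j - (\<sigma>\<^sub>i\<^sup>p\<kappa>\<^sub>j + \<sigma>\<^sub>i\<kappa>\<^sub>j\<^sup>p) P\<^sub>i\<^sub>j Q\<^sub>i\<^sub>j\<close>, where
  \<open>m\<^sub>i\<^sub>j = (P\<^sub>i\<^sub>j\<^sup>2 + Q\<^sub>i\<^sub>j\<^sup>2)/2\<close> is doubly stochastic because \<open>P\<close> and \<open>Q\<close> are orthogonal.
  Since \<open>P\<^sub>i\<^sub>j Q\<^sub>i\<^sub>j \<le> m\<^sub>i\<^sub>j\<close>, the sum is at least \<open>\<Sum>\<^sub>i\<^sub>j m\<^sub>i\<^sub>j (\<sigma>\<^sub>i\<^sup>p - \<kappa>\<^sub>j\<^sup>p)(\<sigma>\<^sub>i - \<kappa>\<^sub>j) \<ge> 0\<close>.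
  The argument works for every choice of SVDs, so it does not matter which one \<open>S_map\<close> picks;
  only their existence is needed, which follows from the spectral theorem for \<open>A\<^sup>T A\<close>.\<close>

section \<open>Frobenius products of matrices in SVD form\<close>

lemma frob_diff_left: "frob (X - Y) Z = frob X Z - frob Y Z"
  by (simp add: frob_def sum_subtractf algebra_simps)

lemma frob_diff_right: "frob X (Y - Z) = frob X Y - frob X Z"
  by (simp add: frob_def sum_subtractf algebra_simps)

lemma frob_commute: "frob X Y = frob Y X"
  by (simp add: frob_def mult.commute)

lemma diag_mat_sandwich_entry:
  "(U ** diag_mat d ** transpose V) $ r $ c = (\<Sum>i\<in>UNIV. U$r$i * d$i * V$c$i)"
proof -
  have "(U ** diag_mat d) $ r $ k = U$r$k * d$k" for k
    by (simp add: matrix_matrix_mult_def diag_mat_def if_distrib cong: if_cong)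
  then show ?thesis by (simp add: matrix_matrix_mult_def transpose_def)
qed

lemma frob_diag_mat_sandwich:
  "frob (U ** diag_mat d ** transpose V) (W ** diag_mat e ** transpose Z) =
    (\<Sum>i\<in>UNIV. \<Sum>j\<in>UNIV. d$i * e$j * (transpose U ** W)$i$j * (transpose V ** Z)$i$j)"
proof -
  let ?t = "\<lambda>r c i j. (U$r$i * d$i * V$c$i) * (W$r$j * e$j * Z$c$j)"
  have "frob (U ** diag_mat d ** transpose V) (W ** diag_mat e ** transpose Z) =
      (\<Sum>r\<in>UNIV. \<Sum>c\<in>UNIV. \<Sum>i\<in>UNIV. \<Sum>j\<in>UNIV. ?t r c i j)"
    by (simp add: frob_def diag_mat_sandwich_entry sum_product)
  also have "\<dots> = (\<Sum>r\<in>UNIV. \<Sum>i\<in>UNIV. \<Sum>c\<in>UNIV. \<Sum>j\<in>UNIV. ?t r c i j)"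
    by (intro sum.cong refl sum.swap)
  also have "\<dots> = (\<Sum>i\<in>UNIV. \<Sum>r\<in>UNIV. \<Sum>j\<in>UNIV. \<Sum>c\<in>UNIV. ?t r c i j)"
    by (subst sum.swap) (intro sum.cong refl sum.swap)
  also have "\<dots> = (\<Sum>i\<in>UNIV. \<Sum>j\<in>UNIV. \<Sum>r\<in>UNIV. \<Sum>c\<in>UNIV. ?t r c i j)"
    by (intro sum.cong refl sum.swap)
  also have "\<dots> = (\<Sum>i\<in>UNIV. \<Sum>j\<in>UNIV. d$i * e$j * (transpose U ** W)$i$j * (transpose V ** Z)$i$j)"
    by (simp add: matrix_matrix_mult_def transpose_def sum_product sum_distrib_left mult_ac)
  finally show ?thesis .
qed

lemma frob_diag_mat_sandwich_same:
  fixes U V :: "real^'n^'n"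
  assumes "orthogonal_matrix U" "orthogonal_matrix V"
  shows "frob (U ** diag_mat d ** transpose V) (U ** diag_mat e ** transpose V) = (\<Sum>i\<in>UNIV. d$i * e$i)"
  using assms by (simp add: frob_diag_mat_sandwich orthogonal_matrix mat_def if_distrib cong: if_cong)

lemma orthogonal_matrix_row_sum_squares:
  fixes P :: "real^'n^'n"
  assumes "orthogonal_matrix P"
  shows "(\<Sum>j\<in>UNIV. (P$i$j)\<^sup>2) = 1"
proof -
  have "row i P \<bullet> row i P = 1"
    using assms by (simp add: orthogonal_matrix_orthonormal_rows norm_eq_1)
  then show ?thesis by (simp add: inner_vec_def row_def power2_eq_square)
qed

lemma orthogonal_matrix_column_sum_squares:
  fixes P :: "real^'n^'n"
  assumes "orthogonal_matrix P"
  shows "(\<Sum>i\<in>UNIV. (P$i$j)\<^sup>2) = 1"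
proof -
  have "orthogonal_matrix (transpose P)" using assms by simp
  from orthogonal_matrix_row_sum_squares[OF this, of j] show ?thesis by (simp add: transpose_def)
qed

lemma mixed_product_le_mean_square:
  fixes a b x y p q :: real
  assumes "0 \<le> a" "0 \<le> b" "0 \<le> x" "0 \<le> y" "0 \<le> (x - y) * (a - b)"
  shows "(x * b + a * y) * (p * q) \<le> (x * a + y * b) * ((p\<^sup>2 + q\<^sup>2) / 2)"
proof -
  have "p * q \<le> (p\<^sup>2 + q\<^sup>2) / 2" using sum_squares_ge_zero[of "p - q" 0]
    by (simp add: power2_eq_square algebra_simps)
  then have "(x * b + a * y) * (p * q) \<le> (x * b + a * y) * ((p\<^sup>2 + q\<^sup>2) / 2)"
    using assms by (intro mult_left_mono) simp_all
  moreover have "0 \<le> ((x - y) * (a - b)) * ((p\<^sup>2 + q\<^sup>2) / 2)" using assms(5) by simp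
  ultimately show ?thesis by (simp add: algebra_simps)
qed

lemma frob_diff_diag_mat_sandwich_nonneg:
  fixes U V W Z :: "real^'n^'n" and x y a b :: "real^'n"
  assumes oU: "orthogonal_matrix U" and oV: "orthogonal_matrix V"
    and oW: "orthogonal_matrix W" and oZ: "orthogonal_matrix Z"
    and nonneg: "\<And>i. 0 \<le> x$i" "\<And>i. 0 \<le> y$i" "\<And>i. 0 \<le> a$i" "\<And>i. 0 \<le> b$i"
    and similarly_ordered: "\<And>i j. 0 \<le> (x$i - y$j) * (a$i - b$j)"
  shows "0 \<le> frob (U ** diag_mat x ** transpose V - W ** diag_mat y ** transpose Z)
                   (U ** diag_mat a ** transpose V - W ** diag_mat b ** transpose Z)"
proof -
  define P where "P = transpose U ** W"
  define Q where "Q = transpose V ** Z"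
  define m where "m i j = ((P$i$j)\<^sup>2 + (Q$i$j)\<^sup>2) / 2" for i j
  have oP: "orthogonal_matrix P" and oQ: "orthogonal_matrix Q"
    using oU oV oW oZ by (simp_all add: P_def Q_def orthogonal_matrix_mul)
  have m_row: "(\<Sum>j\<in>UNIV. m i j) = 1" for i
    using orthogonal_matrix_row_sum_squares[OF oP] orthogonal_matrix_row_sum_squares[OF oQ]
    by (simp add: m_def sum.distrib flip: sum_divide_distrib)
  have m_col: "(\<Sum>i\<in>UNIV. m i j) = 1" for j
    using orthogonal_matrix_column_sum_squares[OF oP] orthogonal_matrix_column_sum_squares[OF oQ]
    by (simp add: m_def sum.distrib flip: sum_divide_distrib)
  let ?X = "U ** diag_mat x ** transpose V" and ?Y = "W ** diag_mat y ** transpose Z"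
  let ?A = "U ** diag_mat a ** transpose V" and ?B = "W ** diag_mat b ** transpose Z"
  have XA: "frob ?X ?A = (\<Sum>i\<in>UNIV. \<Sum>j\<in>UNIV. x$i * a$i * m i j)"
    by (simp add: frob_diag_mat_sandwich_same[OF oU oV] m_row flip: sum_distrib_left)
  have YB: "frob ?Y ?B = (\<Sum>i\<in>UNIV. \<Sum>j\<in>UNIV. y$j * b$j * m i j)"
    by (subst sum.swap) (simp add: frob_diag_mat_sandwich_same[OF oW oZ] m_col flip: sum_distrib_left)
  have XB: "frob ?X ?B = (\<Sum>i\<in>UNIV. \<Sum>j\<in>UNIV. x$i * b$j * (P$i$j * Q$i$j))"
    by (simp add: frob_diag_mat_sandwich P_def Q_def mult.assoc)
  have YA: "frob ?Y ?A = (\<Sum>i\<in>UNIV. \<Sum>j\<in>UNIV. a$i * y$j * (P$i$j * Q$i$j))"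
  proof -
    have "(transpose W ** U) $ j $ i = P$i$j" "(transpose Z ** V) $ j $ i = Q$i$j" for i j
      by (simp_all add: P_def Q_def matrix_matrix_mult_def transpose_def mult.commute)
    then show ?thesis by (subst sum.swap) (simp add: frob_diag_mat_sandwich mult_ac)
  qed
  have "frob (?X - ?Y) (?A - ?B) = frob ?X ?A + frob ?Y ?B - frob ?X ?B - frob ?Y ?A"
    by (simp add: frob_diff_left frob_diff_right)
  also have "\<dots> = (\<Sum>i\<in>UNIV. \<Sum>j\<in>UNIV. (x$i * a$i + y$j * b$j) * m i j
                                       - (x$i * b$j + a$i * y$j) * (P$i$j * Q$i$j))"
    unfolding XA YB XB YA by (simp add: sum.distrib sum_subtractf algebra_simps)
  also have "\<dots> \<ge> 0"
    unfolding m_def using nonneg similarly_ordered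
    by (intro sum_nonneg) (simp only: diff_ge_0_iff_ge mixed_product_le_mean_square)
  finally show ?thesis .
qed

section \<open>Spectral theorem for symmetric matrices\<close>

lemma linear_coeff_eq_0_if_quadratic_nonneg:
  fixes a b :: real
  assumes "\<And>t. 0 \<le> t * a + t\<^sup>2 * b"
  shows "a = 0"
proof -
  define c where "c = \<bar>b\<bar> + 1"
  have c: "c > 0" "b < c" by (auto simp: c_def)
  have "0 \<le> (- a / c) * a + (- a / c)\<^sup>2 * b" by (rule assms)
  also have "\<dots> = a\<^sup>2 * (b - c) / c\<^sup>2"
    using c by (simp add: field_simps power2_eq_square)
  finally have "0 \<le> a\<^sup>2 * (b - c)" using c by (simp add: divide_nonneg_pos zero_le_divide_iff)
  moreover have "a\<^sup>2 * (b - c) \<le> 0" using c by (intro mult_nonneg_nonpos) auto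
  ultimately show ?thesis using c by simp
qed

lemma inner_matrix_vector_symmetric:
  fixes M :: "real^'n^'n"
  assumes "transpose M = M"
  shows "x \<bullet> (M *v y) = (M *v x) \<bullet> y"
  by (metis assms dot_lmul_matrix vector_transpose_matrix)

lemma symmetric_matrix_eigenvector_in_invariant_subspace:
  fixes M :: "real^'n^'n"
  assumes sym: "transpose M = M" and S: "subspace S" "S \<noteq> {0}"
    and inv: "\<And>x. x \<in> S \<Longrightarrow> M *v x \<in> S"
  obtains u l where "u \<in> S" "norm u = 1" "M *v u = l *\<^sub>R u"
proof -
  let ?q = "\<lambda>x. x \<bullet> (M *v x)"
  let ?K = "S \<inter> sphere 0 1"
  obtain x0 where "x0 \<in> S" "x0 \<noteq> 0" using S subspace_0 by blast
  then have "x0 /\<^sub>R norm x0 \<in> ?K" using S by (auto simp: subspace_scale)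
  moreover have "compact ?K" using S by (intro closed_Int_compact closed_subspace) auto
  moreover have "continuous_on ?K ?q" by (intro continuous_intros)
  ultimately obtain u where u: "u \<in> ?K" and umax: "\<And>y. y \<in> ?K \<Longrightarrow> ?q y \<le> ?q u"
    using continuous_attains_sup[of ?K ?q] by blast
  define l where "l = ?q u"
  have uS: "u \<in> S" and uu: "u \<bullet> u = 1" using u by (auto simp: norm_eq_1)
  text \<open>The form \<open>l (y \<bullet> y) - ?q y\<close> is positive semidefinite on \<open>S\<close> and vanishes at \<open>u\<close>,
    so its polarisation at \<open>u\<close> vanishes on \<open>S\<close>; at \<open>y = M u - l u\<close> it equals \<open>-(y \<bullet> y)\<close>.\<close>
  have psd: "0 \<le> l * (y \<bullet> y) - ?q y" if "y \<in> S" for y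
  proof (cases "y = 0")
    case False
    have "y /\<^sub>R norm y \<in> ?K" using that S False by (auto simp: subspace_scale)
    then have "?q (y /\<^sub>R norm y) \<le> l" using umax l_def by blast
    then have "?q y / (norm y)\<^sup>2 \<le> l"
      by (simp add: matrix_vector_mult_scaleR power2_eq_square divide_inverse mult_ac)
    then show ?thesis using False by (simp add: divide_le_eq power2_norm_eq_inner)
  qed simp
  define w where "w = M *v u - l *\<^sub>R u"
  have wS: "w \<in> S" unfolding w_def using inv uS S by (simp add: subspace_diff subspace_scale)
  have "0 \<le> t * (- 2 * (w \<bullet> w)) + t\<^sup>2 * (l * (w \<bullet> w) - ?q w)" for t
  proof -
    have "0 \<le> l * ((u + t *\<^sub>R w) \<bullet> (u + t *\<^sub>R w)) - ?q (u + t *\<^sub>R w)"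
      using psd S uS wS by (simp add: subspace_add subspace_scale)
    also have "\<dots> = t * (- 2 * (w \<bullet> w)) + t\<^sup>2 * (l * (w \<bullet> w) - ?q w)"
      using uu inner_matrix_vector_symmetric[OF sym, of u w]
      by (simp add: w_def l_def power2_eq_square inner_commute algebra_simps)
    finally show ?thesis .
  qed
  then have "w \<bullet> w = 0" using linear_coeff_eq_0_if_quadratic_nonneg by fastforce
  then have "M *v u = l *\<^sub>R u" by (simp add: w_def)
  with uS u show thesis using that by auto
qed

lemma symmetric_matrix_orthonormal_eigenbasis:
  fixes M :: "real^'n^'n"
  assumes sym: "transpose M = M" and "subspace S" and "\<And>x. x \<in> S \<Longrightarrow> M *v x \<in> S"
  shows "\<exists>B\<subseteq>S. pairwise orthogonal B \<and> (\<forall>x\<in>B. norm x = 1 \<and> (\<exists>l. M *v x = l *\<^sub>R x)) \<and> span B = S"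
  using assms(2,3)
proof (induction "dim S" arbitrary: S rule: less_induct)
  case less
  note S = less.prems(1) and inv = less.prems(2)
  show ?case
  proof (cases "S = {0}")
    case True
    then show ?thesis by (intro exI[of _ "{}"]) auto
  next
    case False
    then obtain u l where uS: "u \<in> S" and un: "norm u = 1" and Mu: "M *v u = l *\<^sub>R u"
      using symmetric_matrix_eigenvector_in_invariant_subspace[OF sym S _ inv] by blast
    have uu: "u \<bullet> u = 1" using un by (simp add: norm_eq_1)
    define S' where "S' = S \<inter> {x. u \<bullet> x = 0}"
    have S': "subspace S'" unfolding S'_def using S subspace_hyperplane subspace_inter by blast
    have inv': "M *v x \<in> S'" if "x \<in> S'" for x
      using that inv inner_matrix_vector_symmetric[OF sym, of u x] by (simp add: S'_def Mu)
    have "u \<notin> S'" using uu by (simp add: S'_def)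
    then have "S' \<subset> S" using uS unfolding S'_def by blast
    then have "dim S' < dim S" using S S' by (metis dim_psubset span_eq_iff)
    from less.hyps[OF this S' inv'] obtain B' where B': "B' \<subseteq> S'" "pairwise orthogonal B'"
      "\<forall>x\<in>B'. norm x = 1 \<and> (\<exists>l. M *v x = l *\<^sub>R x)" "span B' = S'" by blast
    show ?thesis
    proof (intro exI[of _ "insert u B'"] conjI)
      show "insert u B' \<subseteq> S" using B'(1) uS by (auto simp: S'_def)
      show "pairwise orthogonal (insert u B')"
        using B'(1,2) by (intro pairwise_orthogonal_insert) (auto simp: S'_def orthogonal_def)
      show "\<forall>x\<in>insert u B'. norm x = 1 \<and> (\<exists>l. M *v x = l *\<^sub>R x)" using B'(3) un Mu by blast
      show "span (insert u B') = S"
      proof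
        show "span (insert u B') \<subseteq> S" using B'(1) uS S by (intro span_minimal) (auto simp: S'_def)
        show "S \<subseteq> span (insert u B')"
        proof
          fix x assume "x \<in> S"
          then have "x - (u \<bullet> x) *\<^sub>R u \<in> S'" using uS S uu
            by (simp add: S'_def subspace_diff subspace_scale inner_diff_right)
          then show "x \<in> span (insert u B')" using B'(4) span_breakdown_eq by blast
        qed
      qed
    qed
  qed
qed

section \<open>Singular value decompositions\<close>

lemma column_of_vectors: "column c (\<chi> r c. g c $ r) = g c"
  by (simp add: column_def vec_eq_iff)

lemma symmetric_matrix_orthogonal_eigenvectors:
  fixes M :: "real^'n^'n"
  assumes "transpose M = M"
  obtains V lam where "orthogonal_matrix V" "\<And>c. M *v column c V = lam c *\<^sub>R column c V"
proof -
  obtain B where B: "pairwise orthogonal B" "\<forall>x\<in>B. norm x = 1 \<and> (\<exists>l. M *v x = l *\<^sub>R x)"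
      "span B = UNIV"
    using symmetric_matrix_orthonormal_eigenbasis[OF assms subspace_UNIV] by blast
  then have "independent B" by (metis norm_zero pairwise_orthogonal_independent zero_neq_one)
  then have "finite B" "card B = dim (UNIV :: (real^'n) set)"
    using B(3) by (metis independent_imp_finite, metis dim_eq_card_independent dim_span)
  then obtain e where "bij_betw e (UNIV::'n set) B"
    using finite_same_card_bij[of "UNIV :: 'n set" B] by auto
  then have eB: "e c \<in> B" and e_inj: "c \<noteq> d \<Longrightarrow> e c \<noteq> e d" for c d
    by (auto simp: bij_betw_def inj_on_def)
  have "\<forall>c. \<exists>l. M *v e c = l *\<^sub>R e c" using B(2) eB by blast
  then obtain lam where lam: "\<And>c. M *v e c = lam c *\<^sub>R e c" by metis
  have "orthogonal_matrix (\<chi> r c. e c $ r)"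
    unfolding orthogonal_matrix_orthonormal_columns column_of_vectors
    using B(1,2) eB e_inj by (auto simp: pairwise_def)
  then show thesis by (rule that[where lam = lam]) (simp add: column_of_vectors lam)
qed

lemma orthonormal_complement_exists:
  fixes T :: "'a::euclidean_space set"
  assumes T: "pairwise orthogonal T" "\<And>x. x \<in> T \<Longrightarrow> norm x = 1"
  obtains R where "pairwise orthogonal R" "\<And>x. x \<in> R \<Longrightarrow> norm x = 1"
    "\<And>t r. t \<in> T \<Longrightarrow> r \<in> R \<Longrightarrow> orthogonal t r" "finite R" "card T + card R = DIM('a)"
proof -
  have "independent T" using T by (metis norm_zero pairwise_orthogonal_independent zero_neq_one)
  define N where "N = {y. \<forall>x\<in>span T. orthogonal x y}"
  have N: "subspace N"
    using subspace_orthogonal_comp[of "span T"] by (simp add: N_def orthogonal_comp_def)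
  have "dim {y \<in> UNIV. \<forall>x\<in>span T. orthogonal x y} + dim (span T) = dim (UNIV :: 'a set)"
    by (rule dim_subspace_orthogonal_to_vectors) auto
  then have dim_N: "dim N + card T = DIM('a)"
    using \<open>independent T\<close> by (simp add: N_def dim_eq_card_independent)
  obtain R where R: "R \<subseteq> N" "pairwise orthogonal R" "\<And>x. x \<in> R \<Longrightarrow> norm x = 1"
      "independent R" "card R = dim N"
    using orthonormal_basis_subspace[OF N] by metis
  show thesis
  proof
    show "orthogonal t r" if "t \<in> T" "r \<in> R" for t r
      using that R(1) span_base[of t T] by (auto simp: N_def)
  qed (use R dim_N independent_imp_finite in auto)
qed

lemma orthogonal_matrix_extending_columns:
  fixes f :: "'n \<Rightarrow> real^'n"
  assumes orth: "\<And>i j. i \<noteq> j \<Longrightarrow> orthogonal (f i) (f j)"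
    and unit: "\<And>i. f i \<noteq> 0 \<Longrightarrow> norm (f i) = 1"
  obtains U where "orthogonal_matrix U" "\<And>i. f i \<noteq> 0 \<Longrightarrow> column i U = f i"
proof -
  define I where "I = {i. f i \<noteq> 0}"
  have "inj_on f I"
    using orth unit by (metis (mono_tags) I_def inj_onI mem_Collect_eq norm_eq_1 orthogonal_def zero_neq_one)
  then have card_fI: "card (f ` I) = card I" by (rule card_image)
  have "pairwise orthogonal (f ` I)" by (intro pairwise_imageI orth)
  moreover have "\<And>x. x \<in> f ` I \<Longrightarrow> norm x = 1" using unit by (auto simp: I_def)
  ultimately obtain R where R: "pairwise orthogonal R" "\<And>x. x \<in> R \<Longrightarrow> norm x = 1"
      "\<And>t r. t \<in> f ` I \<Longrightarrow> r \<in> R \<Longrightarrow> orthogonal t r" "finite R" "card (f ` I) + card R = CARD('n)"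
    by (rule orthonormal_complement_exists) auto
  have "card I + card (- I) = CARD('n)"
    using card_Un_disjoint[of I "- I"] by (simp flip: card_UNIV)
  then have "card R = card (- I)" using R(5) card_fI by simp
  then obtain g where "bij_betw g (- I) R"
    using finite_same_card_bij[of "- I" R] R(4) by auto
  then have gR: "i \<notin> I \<Longrightarrow> g i \<in> R" and g_inj: "i \<notin> I \<Longrightarrow> j \<notin> I \<Longrightarrow> i \<noteq> j \<Longrightarrow> g i \<noteq> g j"
    for i j by (auto simp: bij_betw_def inj_on_def)
  have cross: "orthogonal (f i) (g j)" "orthogonal (g j) (f i)" if "i \<in> I" "j \<notin> I" for i j
    using R(3) gR that orthogonal_commute by blast+
  define h where "h c = (if c \<in> I then f c else g c)" for c
  have "norm (h c) = 1" for c using unit R(2) gR by (auto simp: h_def I_def)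
  moreover have "orthogonal (h c) (h d)" if "c \<noteq> d" for c d
    using that orth gR g_inj R(1) cross
    by (cases "c \<in> I"; cases "d \<in> I") (auto simp: h_def pairwise_def)
  ultimately have "orthogonal_matrix (\<chi> r c. h c $ r)"
    by (simp add: orthogonal_matrix_orthonormal_columns column_of_vectors)
  moreover have "column i (\<chi> r c. h c $ r) = f i" if "f i \<noteq> 0" for i
    using that by (simp add: column_of_vectors h_def I_def)
  ultimately show thesis using that by blast
qed

lemma svd_exists:
  fixes A :: "real^'n^'n"
  obtains U \<sigma> V where "is_svd A U \<sigma> V"
proof -
  obtain V lam where oV: "orthogonal_matrix V"
      and eig: "\<And>c. (transpose A ** A) *v column c V = lam c *\<^sub>R column c V"
    using symmetric_matrix_orthogonal_eigenvectors[of "transpose A ** A"]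
    by (metis matrix_transpose_mul transpose_transpose)
  define \<sigma> where "\<sigma> = (\<chi> c. norm (A *v column c V))"
  text \<open>If \<open>\<sigma>$c = 0\<close>, division by zero makes \<open>f c = 0\<close>, and that column of \<open>U\<close> is left free.\<close>
  define f where "f c = (1 / \<sigma>$c) *\<^sub>R (A *v column c V)" for c
  have "(A *v column c V) \<bullet> (A *v column d V) = 0" if "c \<noteq> d" for c d
  proof -
    have "(A *v column c V) \<bullet> (A *v column d V) = column c V \<bullet> ((transpose A ** A) *v column d V)"
      by (metis dot_lmul_matrix matrix_vector_mul_assoc vector_transpose_matrix)
    also have "\<dots> = 0"
      using that oV by (simp add: eig orthogonal_matrix_orthonormal_columns orthogonal_def)
    finally show ?thesis .
  qed
  then have "\<And>i j. i \<noteq> j \<Longrightarrow> orthogonal (f i) (f j)" by (simp add: f_def orthogonal_def)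
  moreover have "\<And>i. f i \<noteq> 0 \<Longrightarrow> norm (f i) = 1" by (auto simp: f_def \<sigma>_def)
  ultimately obtain U where oU: "orthogonal_matrix U" and colU: "\<And>i. f i \<noteq> 0 \<Longrightarrow> column i U = f i"
    by (metis orthogonal_matrix_extending_columns)
  have "A *v column c V = \<sigma>$c *\<^sub>R column c U" for c
    using colU[of c] by (cases "\<sigma>$c = 0") (auto simp: f_def \<sigma>_def)
  then have "(A ** V) $ r $ c = (U ** diag_mat \<sigma>) $ r $ c" for r c
    by (simp add: matrix_matrix_mult_def matrix_vector_mult_def diag_mat_def column_def
        vec_eq_iff if_distrib mult.commute cong: if_cong)
  then have "A ** V = U ** diag_mat \<sigma>" by (simp add: vec_eq_iff)
  then have "A = U ** diag_mat \<sigma> ** transpose V"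
    using oV by (metis matrix_mul_assoc matrix_mul_rid orthogonal_matrix_def)
  with oU oV have "is_svd A U \<sigma> V" by (simp add: is_svd_def \<sigma>_def)
  then show thesis by (rule that)
qed

lemma S_map_svd:
  obtains U \<sigma> V where "is_svd A U \<sigma> V"
    "S_map s A = U ** diag_mat (\<chi> i. (\<sigma> $ i) powr (2 * s + 1)) ** transpose V"
proof -
  obtain U \<sigma> V where "is_svd A U \<sigma> V" by (rule svd_exists)
  then have "\<exists>B U \<sigma> V. is_svd A U \<sigma> V \<and> B = U ** diag_mat (\<chi> i. (\<sigma> $ i) powr (2 * s + 1)) ** transpose V"
    by blast
  from someI_ex[OF this] show thesis using that unfolding S_map_def by metis
qed

lemma powr_diff_mult_diff_nonneg:
  fixes x y p :: real
  assumes "0 \<le> x" "0 \<le> y" "0 \<le> p"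
  shows "0 \<le> (x powr p - y powr p) * (x - y)"
proof (cases "x \<le> y")
  case True
  then have "x powr p \<le> y powr p" using assms by (intro powr_mono2) auto
  then show ?thesis using True by (simp add: mult_nonpos_nonpos)
next
  case False
  then have "y powr p \<le> x powr p" using assms by (intro powr_mono2) auto
  then show ?thesis using False by simp
qed

theorem mainTheorem4:
  fixes A C :: "real ^ 'n ^ 'n" and s :: real
  assumes "s > - 1/2"
  shows "frob (S_map s A - S_map s C) (A - C) \<ge> 0"
proof -
  obtain U \<sigma> V where A: "is_svd A U \<sigma> V"
    and SA: "S_map s A = U ** diag_mat (\<chi> i. (\<sigma> $ i) powr (2 * s + 1)) ** transpose V"
    by (rule S_map_svd)
  obtain W \<kappa> Z where C: "is_svd C W \<kappa> Z"
    and SC: "S_map s C = W ** diag_mat (\<chi> i. (\<kappa> $ i) powr (2 * s + 1)) ** transpose Z"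
    by (rule S_map_svd)
  have "0 \<le> 2 * s + 1" using assms by simp
  with A C show ?thesis
    unfolding SA SC is_svd_def
    by (auto intro!: frob_diff_diag_mat_sandwich_nonneg powr_diff_mult_diff_nonneg)
qed

end
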